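(* Let $f,g:\mathbb{R}^2\to\mathbb{R}$ be Lipschitz continuous, let $(J,W)$ be a graphon and let $(\widetilde J,\widetilde W)$ be its twin-free quotient. Then \[ \{u\in L^1(J)\mid u_x=u_y \text{ for all twins } x,y\} \] is a closed, dynamically invariant subspace of $L^1(J)$ for $\mathcal D(J,W)$, and the dynamics of $\mathcal D(J,W)$ restricted to this subspace is isometric to the dynamics of $\mathcal D(\widetilde J,\widetilde W)$.
   Context: A graphon $(J,W)$ consists of a probability space $J=(\Omega,\mathcal A,\mu)$ and a symmetric measurable $W:\Omega\times\Omega\to[0,1]$. The graphon dynamical system $\mathcal D(J,W)$ is the flow on $L^1(J)$ given by $\dot u_x=f\big(u_x,\int_J W(x,y)g(u_x,u_y)\,d\mu(y)\big)$, where for each $t$ the equation holds for almost every $x$. Two vertices $x,y$ are twins if $W(x,\cdot)=W(y,\cdot)$ almost everywhere; this is an equivalence relation. The twin-free quotient $(\widetilde J,\widetilde W)$ is obtained by identifying all twins: $\widetilde{\mathcal A}\subseteq\mathcal A$ is the $\sigma$-algebra of sets that do not separate any pair of twins, $\widetilde J$ is the quotient space of twin classes with the $\sigma$-algebra and probability induced from $(\Omega,\widetilde{\mathcal A},\mu)$ via the projection $J\to\widetilde J$, and $\widetilde W$ is the conditional expectation of $W$ with respect to $\widetilde{\mathcal A}\times\widetilde{\mathcal A}$, viewed as a function on $\widetilde J\times\widetilde J$. Dynamically invariant means every trajectory starting in the set stays in it for all times. *)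

theory Defs
  imports "HOL-Probability.Probability"
begin

definition graphon :: "'a measure \<Rightarrow> ('a \<Rightarrow> 'a \<Rightarrow> real) \<Rightarrow> bool" where
  "graphon M W \<longleftrightarrow> prob_space M \<and>
     (\<lambda>p. W (fst p) (snd p)) \<in> borel_measurable (M \<Otimes>\<^sub>M M) \<and>
     (\<forall>x\<in>space M. \<forall>y\<in>space M. W x y = W y x \<and> 0 \<le> W x y \<and> W x y \<le> 1)"

definition l1dist :: "'a measure \<Rightarrow> ('a \<Rightarrow> real) \<Rightarrow> ('a \<Rightarrow> real) \<Rightarrow> real" where
  "l1dist M u v = (LINT x|M. \<bar>u x - v x\<bar>)"

definition gds_field :: "'a measure \<Rightarrow> ('a \<Rightarrow> 'a \<Rightarrow> real) \<Rightarrow> (real \<times> real \<Rightarrow> real)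
    \<Rightarrow> (real \<times> real \<Rightarrow> real) \<Rightarrow> ('a \<Rightarrow> real) \<Rightarrow> 'a \<Rightarrow> real" where
  "gds_field M W f g u x = f (u x, LINT y|M. W x y * g (u x, u y))"

definition gds_trajectory :: "'a measure \<Rightarrow> ('a \<Rightarrow> 'a \<Rightarrow> real) \<Rightarrow> (real \<times> real \<Rightarrow> real)
    \<Rightarrow> (real \<times> real \<Rightarrow> real) \<Rightarrow> (real \<Rightarrow> 'a \<Rightarrow> real) \<Rightarrow> bool" where
  "gds_trajectory M W f g u \<longleftrightarrow>
     (\<forall>t. integrable M (u t)) \<and>
     (\<forall>t. integrable M (gds_field M W f g (u t)) \<and>
          ((\<lambda>h. LINT x|M. \<bar>(u (t + h) x - u t x) / h - gds_field M W f g (u t) x\<bar>) \<longlongrightarrow> 0) (at 0))"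

definition twin :: "'a measure \<Rightarrow> ('a \<Rightarrow> 'a \<Rightarrow> real) \<Rightarrow> 'a \<Rightarrow> 'a \<Rightarrow> bool" where
  "twin M W x y \<longleftrightarrow> x \<in> space M \<and> y \<in> space M \<and> (AE z in M. W x z = W y z)"

definition twin_rel :: "'a measure \<Rightarrow> ('a \<Rightarrow> 'a \<Rightarrow> real) \<Rightarrow> ('a \<times> 'a) set" where
  "twin_rel M W = {(x, y). twin M W x y}"

definition twin_proj :: "'a measure \<Rightarrow> ('a \<Rightarrow> 'a \<Rightarrow> real) \<Rightarrow> 'a \<Rightarrow> 'a set" where
  "twin_proj M W x = twin_rel M W `` {x}"

definition twin_classes :: "'a measure \<Rightarrow> ('a \<Rightarrow> 'a \<Rightarrow> real) \<Rightarrow> 'a set set" where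
  "twin_classes M W = space M // twin_rel M W"

definition twinfree_sets :: "'a measure \<Rightarrow> ('a \<Rightarrow> 'a \<Rightarrow> real) \<Rightarrow> 'a set set" where
  "twinfree_sets M W = {A \<in> sets M. \<forall>x y. twin M W x y \<longrightarrow> (x \<in> A \<longleftrightarrow> y \<in> A)}"

definition twinfree_subalg :: "'a measure \<Rightarrow> ('a \<Rightarrow> 'a \<Rightarrow> real) \<Rightarrow> 'a measure" where
  "twinfree_subalg M W = sigma (space M) (twinfree_sets M W)"

definition twin_quot_space :: "'a measure \<Rightarrow> ('a \<Rightarrow> 'a \<Rightarrow> real) \<Rightarrow> 'a set measure" where
  "twin_quot_space M W = sigma (twin_classes M W)
     {B. B \<subseteq> twin_classes M W \<and> twin_proj M W -` B \<inter> space M \<in> twinfree_sets M W}"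

definition twinfree_J :: "'a measure \<Rightarrow> ('a \<Rightarrow> 'a \<Rightarrow> real) \<Rightarrow> 'a set measure" where
  "twinfree_J M W = distr (restr_to_subalg M (twinfree_subalg M W)) (twin_quot_space M W) (twin_proj M W)"

text \<open>The conditional expectation of W w.r.t. the product of the twin-free sigma-algebra,
  viewed as a function on pairs of twin classes (evaluated at chosen representatives).\<close>
definition twinfree_W :: "'a measure \<Rightarrow> ('a \<Rightarrow> 'a \<Rightarrow> real) \<Rightarrow> 'a set \<Rightarrow> 'a set \<Rightarrow> real" where
  "twinfree_W M W X Y =
     real_cond_exp (M \<Otimes>\<^sub>M M) (twinfree_subalg M W \<Otimes>\<^sub>M twinfree_subalg M W)
       (\<lambda>p. W (fst p) (snd p)) (SOME x. x \<in> X, SOME y. y \<in> Y)"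

definition twin_const_L1 :: "'a measure \<Rightarrow> ('a \<Rightarrow> 'a \<Rightarrow> real) \<Rightarrow> ('a \<Rightarrow> real) set" where
  "twin_const_L1 M W = {u. integrable M u \<and>
     (\<exists>u'. integrable M u' \<and> (AE x in M. u x = u' x) \<and>
           (\<forall>x y. twin M W x y \<longrightarrow> u' x = u' y))}"

definition l1_linear_subspace :: "'a measure \<Rightarrow> ('a \<Rightarrow> real) set \<Rightarrow> bool" where
  "l1_linear_subspace M S \<longleftrightarrow> (\<forall>u\<in>S. integrable M u) \<and> (\<lambda>x. 0) \<in> S \<and>
     (\<forall>u\<in>S. \<forall>v\<in>S. (\<lambda>x. u x + v x) \<in> S) \<and> (\<forall>u\<in>S. \<forall>c. (\<lambda>x. c * u x) \<in> S)"

definition l1_closed :: "'a measure \<Rightarrow> ('a \<Rightarrow> real) set \<Rightarrow> bool" where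
  "l1_closed M S \<longleftrightarrow> (\<forall>U u. (\<forall>n::nat. U n \<in> S) \<longrightarrow> integrable M u \<longrightarrow>
      (\<lambda>n. l1dist M (U n) u) \<longlonglongrightarrow> 0 \<longrightarrow> u \<in> S)"

definition gds_invariant :: "'a measure \<Rightarrow> ('a \<Rightarrow> 'a \<Rightarrow> real) \<Rightarrow> (real \<times> real \<Rightarrow> real)
    \<Rightarrow> (real \<times> real \<Rightarrow> real) \<Rightarrow> ('a \<Rightarrow> real) set \<Rightarrow> bool" where
  "gds_invariant M W f g S \<longleftrightarrow>
     (\<forall>u. gds_trajectory M W f g u \<longrightarrow> u 0 \<in> S \<longrightarrow> (\<forall>t. u t \<in> S))"

text \<open>The dynamics of D(J,W) restricted to S is isometric to the dynamics of D(J',W'):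
  there is an isometry from S onto L1(J') (modulo null functions) mapping trajectories
  in S exactly to trajectories of D(J',W').\<close>
definition gds_isometric :: "'a measure \<Rightarrow> ('a \<Rightarrow> 'a \<Rightarrow> real) \<Rightarrow> ('a \<Rightarrow> real) set
    \<Rightarrow> 'b measure \<Rightarrow> ('b \<Rightarrow> 'b \<Rightarrow> real) \<Rightarrow> (real \<times> real \<Rightarrow> real) \<Rightarrow> (real \<times> real \<Rightarrow> real) \<Rightarrow> bool" where
  "gds_isometric M W S M' W' f g \<longleftrightarrow>
     (\<exists>\<Phi> :: ('a \<Rightarrow> real) \<Rightarrow> ('b \<Rightarrow> real).
        (\<forall>u\<in>S. integrable M' (\<Phi> u)) \<and>
        (\<forall>u\<in>S. \<forall>v\<in>S. l1dist M' (\<Phi> u) (\<Phi> v) = l1dist M u v) \<and>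
        (\<forall>w. integrable M' w \<longrightarrow> (\<exists>u\<in>S. AE y in M'. \<Phi> u y = w y)) \<and>
        (\<forall>U. (\<forall>t. U t \<in> S) \<longrightarrow>
             (gds_trajectory M W f g U \<longleftrightarrow> gds_trajectory M' W' f g (\<lambda>t. \<Phi> (U t)))))"

end

theory Submission
  imports Defs
begin

(* Let P be the conditional expectation onto the sigma-algebra of measurable sets that do not
   separate twins.  A function u is twin-constant iff P u = u a.e., and the defect
   ||u - P u||_1 lies between the L1 distance from u to the twin-constant functions and twice
   that distance; this gives closedness.  The vector field maps twin-invariant functions to
   twin-invariant functions and is Lipschitz in L1 with constant L = Lf (1 + 2 Lg), so along a
   trajectory the defect phi(t) obeys phi(t + h) <= (1 + 2 L |h|) phi(t) + o(h); a Gronwall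
   argument then gives phi = 0 for all times if phi(0) = 0.
   On twin-constant functions, u |-> P u evaluated at representatives of twin classes is an
   isometry onto L1 of the quotient.  For twin-invariant u the integrand W(x,y) g(u x, u y)
   may be replaced by E[W | twin-invariant x twin-invariant](x,y) g(u x, u y) without changing
   the interaction term up to null sets (Fubini and the defining property of the conditional
   expectation), which is exactly the vector field of the quotient system, so trajectories
   correspond. *)

section \<open>Gronwall-type estimate without differentiability\<close>

lemma exit_time_exists:
  fixes \<rho> :: "real \<Rightarrow> real"
  assumes cont: "\<And>t. isCont \<rho> t" and "\<rho> 0 < 0" and "0 < \<rho> T" and "0 \<le> T"
  shows "\<exists>s. 0 \<le> s \<and> s < T \<and> \<rho> s \<le> 0 \<and> (\<forall>d>0. \<exists>h. 0 < h \<and> h < d \<and> 0 < \<rho> (s + h))"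
proof -
  define B where "B = {t. 0 \<le> t \<and> t \<le> T \<and> 0 < \<rho> t}"
  have TB: "T \<in> B" and bdd: "bdd_below B"
    using assms unfolding B_def by (auto intro: bdd_belowI[of _ 0])
  define s where "s = Inf B"
  have s0: "0 \<le> s"
    unfolding s_def using TB by (intro cInf_greatest) (auto simp: B_def)
  have sT: "s \<le> T"
    unfolding s_def by (rule cInf_lower[OF TB bdd])
  have before: "\<rho> r \<le> 0" if "0 \<le> r" "r < s" for r
    using that sT cInf_lower[OF _ bdd, of r] unfolding s_def B_def by force
  have "\<rho> s \<le> 0"
  proof (rule ccontr)
    assume "\<not> \<rho> s \<le> 0"
    then have "s \<noteq> 0" "eventually (\<lambda>t. 0 < \<rho> t) (at s)"
      using \<open>\<rho> 0 < 0\<close> cont[of s] by (auto simp: isCont_def order_tendstoD)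
    then obtain d where "d > 0" and d: "\<And>t. t \<noteq> s \<Longrightarrow> dist t s < d \<Longrightarrow> 0 < \<rho> t"
      unfolding eventually_at by auto
    define r where "r = s - min (d / 2) (s / 2)"
    have "0 \<le> r" "r < s" "dist r s < d"
      unfolding r_def using \<open>d > 0\<close> \<open>s \<noteq> 0\<close> s0 by (auto simp: dist_real_def)
    with before d show False by fastforce
  qed
  moreover have "\<exists>h. 0 < h \<and> h < d \<and> 0 < \<rho> (s + h)" if "d > 0" for d
  proof -
    obtain x where x: "x \<in> B" "x < s + d"
      using cInf_less_iff[OF _ bdd, of "s + d"] TB \<open>d > 0\<close> unfolding s_def by auto
    have "s \<le> x"
      unfolding s_def by (rule cInf_lower[OF x(1) bdd])
    moreover have "x \<noteq> s"
      using x(1) \<open>\<rho> s \<le> 0\<close> by (auto simp: B_def)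
    ultimately show ?thesis
      using x by (intro exI[of _ "x - s"]) (auto simp: B_def)
  qed
  moreover have "s \<noteq> T"
    using \<open>\<rho> s \<le> 0\<close> \<open>0 < \<rho> T\<close> by auto
  ultimately show ?thesis
    using s0 sT by auto
qed

lemma gronwall_exp_bound_forward:
  fixes \<phi> :: "real \<Rightarrow> real"
  assumes cont: "\<And>t. isCont \<phi> t" and "0 < \<delta>" and "\<phi> 0 < \<delta>" and "0 \<le> K"
    and growth: "\<And>t \<epsilon>. 0 \<le> t \<Longrightarrow> 0 < \<epsilon> \<Longrightarrow>
      \<exists>d>0. \<forall>h. 0 < h \<and> h < d \<longrightarrow> \<phi> (t + h) \<le> \<phi> t + h * K * \<phi> t + \<epsilon> * h"
    and "0 \<le> T"
  shows "\<phi> T \<le> \<delta> * exp ((K + 1) * T)"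
proof (rule ccontr)
  define \<psi> where "\<psi> t = \<delta> * exp ((K + 1) * t)" for t
  assume "\<not> \<phi> T \<le> \<delta> * exp ((K + 1) * T)"
  then obtain s where "0 \<le> s" and s: "\<phi> s \<le> \<psi> s"
    and after: "\<And>d. d > 0 \<Longrightarrow> \<exists>h. 0 < h \<and> h < d \<and> \<psi> (s + h) < \<phi> (s + h)"
    using exit_time_exists[of "\<lambda>t. \<phi> t - \<psi> t" T] assms
    unfolding \<psi>_def by (force intro: continuous_intros)
  have "0 < \<psi> s"
    unfolding \<psi>_def using \<open>0 < \<delta>\<close> by simp
  then obtain d where "d > 0"
    and d: "\<And>h. 0 < h \<Longrightarrow> h < d \<Longrightarrow> \<phi> (s + h) \<le> \<phi> s + h * K * \<phi> s + \<psi> s * h"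
    using growth[OF \<open>0 \<le> s\<close>] by blast
  obtain h where h: "0 < h" "h < d" and above: "\<psi> (s + h) < \<phi> (s + h)"
    using after[OF \<open>d > 0\<close>] by blast
  have "\<phi> (s + h) \<le> \<phi> s * (1 + h * K) + \<psi> s * h"
    using d[OF h] by (simp add: algebra_simps)
  also have "\<dots> \<le> \<psi> s * (1 + h * K) + \<psi> s * h"
    using s h \<open>0 \<le> K\<close> by (intro add_right_mono mult_right_mono) auto
  also have "\<dots> = \<psi> s * (1 + (K + 1) * h)"
    by (simp add: algebra_simps)
  also have "\<dots> \<le> \<psi> s * exp ((K + 1) * h)"
    using \<open>0 < \<psi> s\<close> by (intro mult_left_mono) (auto simp: exp_ge_add_one_self)
  also have "\<dots> = \<psi> (s + h)"
    unfolding \<psi>_def by (simp add: exp_add[symmetric] algebra_simps)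
  finally show False
    using above by simp
qed

lemma gronwall_nonpos_forward:
  fixes \<phi> :: "real \<Rightarrow> real"
  assumes cont: "\<And>t. isCont \<phi> t" and "\<phi> 0 \<le> 0" and "0 \<le> K"
    and growth: "\<And>t \<epsilon>. 0 \<le> t \<Longrightarrow> 0 < \<epsilon> \<Longrightarrow>
      \<exists>d>0. \<forall>h. 0 < h \<and> h < d \<longrightarrow> \<phi> (t + h) \<le> \<phi> t + h * K * \<phi> t + \<epsilon> * h"
    and "0 \<le> T"
  shows "\<phi> T \<le> 0"
proof (rule ccontr)
  assume "\<not> \<phi> T \<le> 0"
  define \<delta> where "\<delta> = \<phi> T / (2 * exp ((K + 1) * T))"
  have "0 < \<delta>"
    unfolding \<delta>_def using \<open>\<not> \<phi> T \<le> 0\<close> by auto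
  then have "\<phi> T \<le> \<delta> * exp ((K + 1) * T)"
    using assms by (intro gronwall_exp_bound_forward) auto
  then show False
    using \<open>\<not> \<phi> T \<le> 0\<close> unfolding \<delta>_def by simp
qed

lemma gronwall_nonpos:
  fixes \<phi> :: "real \<Rightarrow> real"
  assumes cont: "\<And>t. isCont \<phi> t" and "\<phi> 0 \<le> 0" and "0 \<le> K"
    and growth: "\<And>t \<epsilon>. 0 < \<epsilon> \<Longrightarrow>
      \<exists>d>0. \<forall>h. h \<noteq> 0 \<and> \<bar>h\<bar> < d \<longrightarrow> \<phi> (t + h) \<le> \<phi> t + \<bar>h\<bar> * K * \<phi> t + \<epsilon> * \<bar>h\<bar>"
  shows "\<phi> T \<le> 0"
proof -
  have "\<phi> (\<sigma> * T') \<le> 0" if \<sigma>: "\<bar>\<sigma>\<bar> = 1" and "0 \<le> T'" for \<sigma> T' :: real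
  proof (rule gronwall_nonpos_forward[of "\<lambda>t. \<phi> (\<sigma> * t)", OF _ _ \<open>0 \<le> K\<close> _ \<open>0 \<le> T'\<close>])
    show "isCont (\<lambda>t. \<phi> (\<sigma> * t)) t" for t
      by (rule isCont_o2[OF _ cont]) (intro continuous_intros)
    show "\<phi> (\<sigma> * 0) \<le> 0"
      using \<open>\<phi> 0 \<le> 0\<close> by simp
    fix t \<epsilon> :: real assume "0 < \<epsilon>"
    then obtain d where "d > 0" and d: "\<And>h. h \<noteq> 0 \<Longrightarrow> \<bar>h\<bar> < d \<Longrightarrow>
        \<phi> (\<sigma> * t + h) \<le> \<phi> (\<sigma> * t) + \<bar>h\<bar> * K * \<phi> (\<sigma> * t) + \<epsilon> * \<bar>h\<bar>"
      using growth by blast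
    have "\<phi> (\<sigma> * (t + h)) \<le> \<phi> (\<sigma> * t) + h * K * \<phi> (\<sigma> * t) + \<epsilon> * h"
      if "0 < h" "h < d" for h
      using d[of "\<sigma> * h"] that \<sigma> by (auto simp: abs_mult distrib_left)
    with \<open>d > 0\<close> show "\<exists>d>0. \<forall>h. 0 < h \<and> h < d \<longrightarrow>
        \<phi> (\<sigma> * (t + h)) \<le> \<phi> (\<sigma> * t) + h * K * \<phi> (\<sigma> * t) + \<epsilon> * h"
      by blast
  qed
  from this[of 1 T] this[of "-1" "-T"] show ?thesis
    by (cases "0 \<le> T") auto
qed

lemma lipschitz_on_UNIV_Pair_abs_le:
  fixes h :: "real \<times> real \<Rightarrow> real"
  assumes "L-lipschitz_on UNIV h"
  shows "\<bar>h (a, b) - h (c, d)\<bar> \<le> L * (\<bar>a - c\<bar> + \<bar>b - d\<bar>)"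
proof -
  have "\<bar>h (a, b) - h (c, d)\<bar> \<le> L * norm (a - c, b - d)"
    using lipschitz_on_normD[OF assms] by fastforce
  also have "\<dots> \<le> L * (\<bar>a - c\<bar> + \<bar>b - d\<bar>)"
    using norm_Pair_le[of "a - c" "b - d"] lipschitz_on_nonneg[OF assms]
    by (intro mult_left_mono) auto
  finally show ?thesis .
qed

lemma lipschitz_on_UNIV_Pair_abs_bound:
  fixes h :: "real \<times> real \<Rightarrow> real"
  assumes "L-lipschitz_on UNIV h"
  shows "\<bar>h (a, b)\<bar> \<le> \<bar>h (0, 0)\<bar> + L * (\<bar>a\<bar> + \<bar>b\<bar>)"
  using lipschitz_on_UNIV_Pair_abs_le[OF assms, of a b 0 0] by simp

lemma integral_abs_diff_le_difference_quotient:
  fixes a b v :: "'a \<Rightarrow> real"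
  assumes a: "integrable M a" and b: "integrable M b" and v: "integrable M v" and "h \<noteq> 0"
  shows "(LINT x|M. \<bar>b x - a x\<bar>)
    \<le> \<bar>h\<bar> * (LINT x|M. \<bar>(b x - a x) / h - v x\<bar>) + \<bar>h\<bar> * (LINT x|M. \<bar>v x\<bar>)"
proof -
  have "\<bar>b x - a x\<bar> \<le> \<bar>h\<bar> * \<bar>(b x - a x) / h - v x\<bar> + \<bar>h\<bar> * \<bar>v x\<bar>" for x
  proof -
    have "b x - a x = h * ((b x - a x) / h - v x) + h * v x"
      using \<open>h \<noteq> 0\<close> by (simp add: field_simps)
    then show ?thesis
      by (metis abs_mult abs_triangle_ineq)
  qed
  then have "(LINT x|M. \<bar>b x - a x\<bar>) \<le> (LINT x|M. \<bar>h\<bar> * \<bar>(b x - a x) / h - v x\<bar> + \<bar>h\<bar> * \<bar>v x\<bar>)"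
    using a b v by (intro integral_mono) auto
  also have "\<dots> = \<bar>h\<bar> * (LINT x|M. \<bar>(b x - a x) / h - v x\<bar>) + \<bar>h\<bar> * (LINT x|M. \<bar>v x\<bar>)"
    using a b v by simp
  finally show ?thesis .
qed

section \<open>Distance to the conditional expectation\<close>

definition cond_exp_dist :: "'a measure \<Rightarrow> 'a measure \<Rightarrow> ('a \<Rightarrow> real) \<Rightarrow> real" where
  "cond_exp_dist M F u = (LINT x|M. \<bar>u x - real_cond_exp M F u x\<bar>)"

context sigma_finite_subalgebra
begin

lemma real_cond_exp_abs_le:
  assumes u: "integrable M u"
  shows "AE x in M. \<bar>real_cond_exp M F u x\<bar> \<le> real_cond_exp M F (\<lambda>x. \<bar>u x\<bar>) x"
proof -
  have "integrable M (\<lambda>x. \<bar>u x\<bar>)"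
    using u by simp
  then have "AE x in M. real_cond_exp M F u x \<le> real_cond_exp M F (\<lambda>x. \<bar>u x\<bar>) x"
    and "AE x in M. real_cond_exp M F (\<lambda>x. - \<bar>u x\<bar>) x \<le> real_cond_exp M F u x"
    using u by (auto intro!: real_cond_exp_mono)
  moreover have "AE x in M. real_cond_exp M F (\<lambda>x. - \<bar>u x\<bar>) x = - real_cond_exp M F (\<lambda>x. \<bar>u x\<bar>) x"
    using u real_cond_exp_cmult[of "\<lambda>x. \<bar>u x\<bar>" "-1"] by simp
  ultimately show ?thesis
    by eventually_elim auto
qed

lemma integral_abs_real_cond_exp_le:
  assumes u: "integrable M u"
  shows "(LINT x|M. \<bar>real_cond_exp M F u x\<bar>) \<le> (LINT x|M. \<bar>u x\<bar>)"
proof -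
  have "integrable M (\<lambda>x. \<bar>u x\<bar>)"
    using u by simp
  then have "(LINT x|M. \<bar>real_cond_exp M F u x\<bar>) \<le> (LINT x|M. real_cond_exp M F (\<lambda>x. \<bar>u x\<bar>) x)"
    using u real_cond_exp_abs_le[OF u] by (intro integral_mono_AE) auto
  also have "\<dots> = (LINT x|M. \<bar>u x\<bar>)"
    using u by (intro real_cond_exp_int) simp
  finally show ?thesis .
qed

lemma cond_exp_dist_nonneg: "0 \<le> cond_exp_dist M F u"
  unfolding cond_exp_dist_def by simp

lemma cond_exp_dist_eq_0_iff:
  assumes u: "integrable M u"
  shows "cond_exp_dist M F u = 0 \<longleftrightarrow> (AE x in M. real_cond_exp M F u x = u x)"
proof -
  have "integrable M (\<lambda>x. \<bar>u x - real_cond_exp M F u x\<bar>)"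
    using u by (intro integrable_abs Bochner_Integration.integrable_diff real_cond_exp_int)
  then show ?thesis
    unfolding cond_exp_dist_def by (subst integral_nonneg_eq_0_iff_AE) auto
qed

lemma cond_exp_dist_add_le:
  assumes u: "integrable M u" and v: "integrable M v"
  shows "cond_exp_dist M F (\<lambda>x. u x + v x) \<le> cond_exp_dist M F u + cond_exp_dist M F v"
proof -
  have E_int: "integrable M (real_cond_exp M F u)" "integrable M (real_cond_exp M F v)"
    "integrable M (real_cond_exp M F (\<lambda>x. u x + v x))"
    using u v by (auto intro: real_cond_exp_int)
  have "cond_exp_dist M F (\<lambda>x. u x + v x)
      \<le> (LINT x|M. \<bar>u x - real_cond_exp M F u x\<bar> + \<bar>v x - real_cond_exp M F v x\<bar>)"
    unfolding cond_exp_dist_def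
  proof (rule integral_mono_AE)
    show "AE x in M. \<bar>u x + v x - real_cond_exp M F (\<lambda>x. u x + v x) x\<bar>
        \<le> \<bar>u x - real_cond_exp M F u x\<bar> + \<bar>v x - real_cond_exp M F v x\<bar>"
      using real_cond_exp_add[OF u v] by eventually_elim auto
  qed (use u v E_int in auto)
  also have "\<dots> = cond_exp_dist M F u + cond_exp_dist M F v"
    unfolding cond_exp_dist_def using u v E_int by (intro Bochner_Integration.integral_add) auto
  finally show ?thesis .
qed

lemma cond_exp_dist_cmult:
  assumes u: "integrable M u"
  shows "cond_exp_dist M F (\<lambda>x. c * u x) = \<bar>c\<bar> * cond_exp_dist M F u"
proof -
  have "cond_exp_dist M F (\<lambda>x. c * u x) = (LINT x|M. \<bar>c\<bar> * \<bar>u x - real_cond_exp M F u x\<bar>)"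
    unfolding cond_exp_dist_def
  proof (rule integral_cong_AE)
    show "AE x in M. \<bar>c * u x - real_cond_exp M F (\<lambda>x. c * u x) x\<bar>
        = \<bar>c\<bar> * \<bar>u x - real_cond_exp M F u x\<bar>"
      using real_cond_exp_cmult[OF u, of c] by eventually_elim (simp add: abs_mult[symmetric] algebra_simps)
  qed (use u in auto)
  then show ?thesis
    unfolding cond_exp_dist_def by simp
qed

lemma cond_exp_dist_le_integral_abs:
  assumes u: "integrable M u"
  shows "cond_exp_dist M F u \<le> 2 * (LINT x|M. \<bar>u x\<bar>)"
proof -
  have "cond_exp_dist M F u \<le> (LINT x|M. \<bar>u x\<bar> + \<bar>real_cond_exp M F u x\<bar>)"
    unfolding cond_exp_dist_def using u real_cond_exp_int(1)[OF u]
    by (intro integral_mono) auto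
  also have "\<dots> = (LINT x|M. \<bar>u x\<bar>) + (LINT x|M. \<bar>real_cond_exp M F u x\<bar>)"
    using u real_cond_exp_int(1)[OF u] by (intro Bochner_Integration.integral_add) auto
  also have "\<dots> \<le> 2 * (LINT x|M. \<bar>u x\<bar>)"
    using integral_abs_real_cond_exp_le[OF u] by simp
  finally show ?thesis .
qed

lemma cond_exp_dist_diff_le:
  assumes u: "integrable M u" and v: "integrable M v"
  shows "cond_exp_dist M F u \<le> cond_exp_dist M F v + 2 * (LINT x|M. \<bar>u x - v x\<bar>)"
proof -
  have "cond_exp_dist M F u = cond_exp_dist M F (\<lambda>x. v x + (u x - v x))"
    by simp
  also have "\<dots> \<le> cond_exp_dist M F v + cond_exp_dist M F (\<lambda>x. u x - v x)"
    using u v by (intro cond_exp_dist_add_le) auto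
  also have "\<dots> \<le> cond_exp_dist M F v + 2 * (LINT x|M. \<bar>u x - v x\<bar>)"
    using u v by (intro add_left_mono cond_exp_dist_le_integral_abs) auto
  finally show ?thesis .
qed

lemma abs_cond_exp_dist_diff_le:
  assumes "integrable M u" and "integrable M v"
  shows "\<bar>cond_exp_dist M F u - cond_exp_dist M F v\<bar> \<le> 2 * (LINT x|M. \<bar>u x - v x\<bar>)"
  using cond_exp_dist_diff_le[OF assms] cond_exp_dist_diff_le[OF assms(2,1)]
  by (simp add: abs_minus_commute)

end

section \<open>Twin-constant functions and the twin-free quotient\<close>

locale graphon_space =
  fixes M :: "'a measure" and W :: "'a \<Rightarrow> 'a \<Rightarrow> real"
  assumes graphon: "graphon M W"
begin

sublocale prob_space M
  using graphon unfolding graphon_def by auto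

lemma W_measurable[measurable]: "(\<lambda>p. W (fst p) (snd p)) \<in> borel_measurable (M \<Otimes>\<^sub>M M)"
  using graphon unfolding graphon_def by auto

lemma W_section_measurable[measurable]: "x \<in> space M \<Longrightarrow> W x \<in> borel_measurable M"
  using measurable_Pair2[OF W_measurable, of x] by simp

lemma W_bounds: "x \<in> space M \<Longrightarrow> y \<in> space M \<Longrightarrow> 0 \<le> W x y \<and> W x y \<le> 1"
  using graphon unfolding graphon_def by auto

lemma twin_in_space: "twin M W x y \<Longrightarrow> x \<in> space M \<and> y \<in> space M"
  unfolding twin_def by auto

lemma twin_refl: "x \<in> space M \<Longrightarrow> twin M W x x"
  unfolding twin_def by auto

lemma twin_sym: "twin M W x y \<Longrightarrow> twin M W y x"
  unfolding twin_def by (auto elim: AE_mp)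

lemma sigma_algebra_twinfree_sets: "sigma_algebra (space M) (twinfree_sets M W)"
  unfolding sigma_algebra_iff2
proof (intro conjI allI ballI impI)
  show "twinfree_sets M W \<subseteq> Pow (space M)"
    unfolding twinfree_sets_def using sets.sets_into_space by blast
  show "{} \<in> twinfree_sets M W"
    unfolding twinfree_sets_def by blast
  show "space M - s \<in> twinfree_sets M W" if "s \<in> twinfree_sets M W" for s
    using that twin_in_space unfolding twinfree_sets_def by blast
  show "(\<Union>i. A i) \<in> twinfree_sets M W" if A: "range A \<subseteq> twinfree_sets M W" for A :: "nat \<Rightarrow> 'a set"
  proof -
    have "(\<Union>i. A i) \<in> sets M"
      using A unfolding twinfree_sets_def by (intro sets.countable_UN) blast
    then show ?thesis
      using A unfolding twinfree_sets_def by blast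
  qed
qed

abbreviation \<A> :: "'a measure" where
  "\<A> \<equiv> twinfree_subalg M W"

lemma sets_twinfree_subalg: "sets \<A> = twinfree_sets M W"
  unfolding twinfree_subalg_def using sigma_algebra_twinfree_sets
  by (simp add: sigma_algebra.sets_measure_of_eq)

lemma space_twinfree_subalg: "space \<A> = space M"
  unfolding twinfree_subalg_def using sigma_algebra_twinfree_sets
  by (simp add: sigma_algebra.space_measure_of_eq)

lemma subalgebra_twinfree_subalg: "subalgebra M \<A>"
  unfolding subalgebra_def sets_twinfree_subalg space_twinfree_subalg twinfree_sets_def by blast

sublocale sigma_finite_subalgebra M \<A>
  unfolding sigma_finite_subalgebra_def
  using subalgebra_twinfree_subalg prob_space_imp_sigma_finite[OF
      prob_space_restr_to_subalg[OF subalgebra_twinfree_subalg prob_space_axioms]]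
  by blast

lemma twin_eq_if_measurable_twinfree:
  fixes h :: "'a \<Rightarrow> real"
  assumes h: "h \<in> borel_measurable \<A>" and "twin M W x y"
  shows "h x = h y"
proof -
  have "h -` {h x} \<inter> space M \<in> twinfree_sets M W"
    using measurable_sets[OF h, of "{h x}"] by (simp add: sets_twinfree_subalg space_twinfree_subalg)
  moreover have "x \<in> h -` {h x} \<inter> space M"
    using twin_in_space[OF \<open>twin M W x y\<close>] by auto
  ultimately have "y \<in> h -` {h x} \<inter> space M"
    using \<open>twin M W x y\<close> unfolding twinfree_sets_def by blast
  then show ?thesis
    by simp
qed

lemma twin_eq_if_measurable_twinfree_pair:
  fixes h :: "'a \<times> 'a \<Rightarrow> real"
  assumes h: "h \<in> borel_measurable (\<A> \<Otimes>\<^sub>M \<A>)" and "twin M W x x'" "twin M W y y'"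
  shows "h (x, y) = h (x', y')"
proof -
  have "y \<in> space \<A>" "x' \<in> space \<A>"
    using assms twin_in_space space_twinfree_subalg by auto
  then show ?thesis
    using twin_eq_if_measurable_twinfree[OF measurable_Pair1[OF h] \<open>twin M W x x'\<close>]
      twin_eq_if_measurable_twinfree[OF measurable_Pair2[OF h] \<open>twin M W y y'\<close>]
    by simp
qed

lemma measurable_twinfreeI:
  assumes h: "h \<in> measurable M N" and twin_eq: "\<And>x y. twin M W x y \<Longrightarrow> h x = h y"
  shows "h \<in> measurable \<A> N"
proof (rule measurableI)
  show "h x \<in> space N" if "x \<in> space \<A>" for x
    using that h space_twinfree_subalg measurable_space by metis
  show "h -` B \<inter> space \<A> \<in> sets \<A>" if "B \<in> sets N" for B
  proof -
    have "x \<in> h -` B \<longleftrightarrow> y \<in> h -` B" if "twin M W x y" for x y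
      using twin_eq[OF that] by simp
    then show ?thesis
      using measurable_sets[OF h \<open>B \<in> sets N\<close>] twin_in_space
      unfolding sets_twinfree_subalg space_twinfree_subalg twinfree_sets_def by blast
  qed
qed

abbreviation S :: "('a \<Rightarrow> real) set" where
  "S \<equiv> twin_const_L1 M W"

lemma mem_twin_const_L1_iff:
  "u \<in> S \<longleftrightarrow> integrable M u \<and> (AE x in M. real_cond_exp M \<A> u x = u x)"
proof
  assume "u \<in> S"
  then obtain u' where u: "integrable M u" and u': "integrable M u'" "AE x in M. u x = u' x"
      "\<And>x y. twin M W x y \<Longrightarrow> u' x = u' y"
    unfolding twin_const_L1_def by blast
  have "u' \<in> borel_measurable \<A>"
    using measurable_twinfreeI[OF borel_measurable_integrable[OF u'(1)] u'(3)] .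
  then have "AE x in M. real_cond_exp M \<A> u' x = u' x"
    by (rule real_cond_exp_F_meas[OF u'(1)])
  moreover have "AE x in M. real_cond_exp M \<A> u x = real_cond_exp M \<A> u' x"
    using u u'(1,2) by (intro real_cond_exp_cong) (auto intro: borel_measurable_integrable)
  ultimately have "AE x in M. real_cond_exp M \<A> u x = u x"
    using u'(2) by eventually_elim simp
  with u show "integrable M u \<and> (AE x in M. real_cond_exp M \<A> u x = u x)" ..
next
  assume u: "integrable M u \<and> (AE x in M. real_cond_exp M \<A> u x = u x)"
  have "real_cond_exp M \<A> u x = real_cond_exp M \<A> u y" if "twin M W x y" for x y
    using twin_eq_if_measurable_twinfree[OF borel_measurable_cond_exp that] .
  moreover have "integrable M (real_cond_exp M \<A> u)"
    using u real_cond_exp_int(1) by blast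
  moreover have "AE x in M. u x = real_cond_exp M \<A> u x"
    using AE_symmetric[OF conjunct2[OF u]] .
  ultimately show "u \<in> S"
    using u unfolding twin_const_L1_def mem_Collect_eq by blast
qed

lemma twin_const_L1_integrable: "u \<in> S \<Longrightarrow> integrable M u"
  by (simp add: mem_twin_const_L1_iff)

lemma twin_const_L1_if_measurable_twinfree:
  "integrable M u \<Longrightarrow> u \<in> borel_measurable \<A> \<Longrightarrow> u \<in> S"
  by (simp add: mem_twin_const_L1_iff)

lemma cond_exp_dist_eq_0_iff_twin_const:
  "integrable M u \<Longrightarrow> cond_exp_dist M \<A> u = 0 \<longleftrightarrow> u \<in> S"
  by (simp add: cond_exp_dist_eq_0_iff mem_twin_const_L1_iff)

lemma l1_linear_subspace_twin_const_L1: "l1_linear_subspace M S"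
  unfolding l1_linear_subspace_def
proof (intro conjI ballI allI)
  show "(\<lambda>x. 0) \<in> S"
    unfolding twin_const_L1_def by auto
next
  fix u v assume "u \<in> S" "v \<in> S"
  then obtain u' v' where u: "integrable M u" "integrable M u'" "AE x in M. u x = u' x"
      "\<And>x y. twin M W x y \<Longrightarrow> u' x = u' y"
    and v: "integrable M v" "integrable M v'" "AE x in M. v x = v' x"
      "\<And>x y. twin M W x y \<Longrightarrow> v' x = v' y"
    unfolding twin_const_L1_def by auto
  have "AE x in M. u x + v x = u' x + v' x"
    using u(3) v(3) by eventually_elim simp
  moreover have "u' x + v' x = u' y + v' y" if "twin M W x y" for x y
    using u(4)[OF that] v(4)[OF that] by simp
  moreover have "integrable M (\<lambda>x. u x + v x)" "integrable M (\<lambda>x. u' x + v' x)"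
    using u(1,2) v(1,2) by simp_all
  ultimately show "(\<lambda>x. u x + v x) \<in> S"
    unfolding twin_const_L1_def mem_Collect_eq by blast
next
  fix u c assume "u \<in> S"
  then obtain u' where u: "integrable M u" "integrable M u'" "AE x in M. u x = u' x"
      "\<And>x y. twin M W x y \<Longrightarrow> u' x = u' y"
    unfolding twin_const_L1_def by auto
  have "AE x in M. c * u x = c * u' x"
    using u(3) by eventually_elim simp
  moreover have "c * u' x = c * u' y" if "twin M W x y" for x y
    using u(4)[OF that] by simp
  moreover have "integrable M (\<lambda>x. c * u x)" "integrable M (\<lambda>x. c * u' x)"
    using u(1,2) by simp_all
  ultimately show "(\<lambda>x. c * u x) \<in> S"
    unfolding twin_const_L1_def mem_Collect_eq by blast
qed (rule twin_const_L1_integrable)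

lemma l1_closed_twin_const_L1: "l1_closed M S"
  unfolding l1_closed_def
proof (intro allI impI)
  fix U :: "nat \<Rightarrow> 'a \<Rightarrow> real" and u
  assume U: "\<forall>n. U n \<in> S" and u: "integrable M u" and lim: "(\<lambda>n. l1dist M (U n) u) \<longlonglongrightarrow> 0"
  have bound: "cond_exp_dist M \<A> u \<le> 2 * l1dist M (U n) u" for n
  proof -
    have "U n \<in> S"
      using U by blast
    then have "cond_exp_dist M \<A> u \<le> 2 * (LINT x|M. \<bar>u x - U n x\<bar>)"
      using cond_exp_dist_diff_le[OF u twin_const_L1_integrable]
        cond_exp_dist_eq_0_iff_twin_const[OF twin_const_L1_integrable] by fastforce
    moreover have "(LINT x|M. \<bar>u x - U n x\<bar>) = l1dist M (U n) u"
      unfolding l1dist_def by (simp only: abs_minus_commute)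
    ultimately show ?thesis
      by simp
  qed
  have "(\<lambda>n. 2 * l1dist M (U n) u) \<longlonglongrightarrow> 0"
    using tendsto_mult_right_zero[OF lim] .
  then have "cond_exp_dist M \<A> u \<le> 0"
    by (rule LIMSEQ_le_const) (use bound in blast)
  then show "u \<in> S"
    using cond_exp_dist_nonneg[of u] cond_exp_dist_eq_0_iff_twin_const[OF u] by simp
qed

abbreviation proj :: "'a \<Rightarrow> 'a set" where
  "proj \<equiv> twin_proj M W"

abbreviation Q :: "'a set measure" where
  "Q \<equiv> twin_quot_space M W"

abbreviation J' :: "'a set measure" where
  "J' \<equiv> twinfree_J M W"

definition rep :: "'a set \<Rightarrow> 'a" where
  "rep X = (SOME x. x \<in> X)"

lemma twin_proj_eq: "proj x = {y. twin M W x y}"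
  unfolding twin_proj_def twin_rel_def by auto

lemma twin_proj_in_classes: "x \<in> space M \<Longrightarrow> proj x \<in> twin_classes M W"
  unfolding twin_classes_def twin_proj_def by (rule quotientI)

lemma twin_rep_proj: "x \<in> space M \<Longrightarrow> twin M W x (rep (proj x))"
proof -
  assume "x \<in> space M"
  then have "x \<in> proj x"
    using twin_refl twin_proj_eq by auto
  then have "rep (proj x) \<in> proj x"
    unfolding rep_def by (rule someI)
  then show ?thesis
    using twin_proj_eq by auto
qed

lemma rep_in_space:
  assumes "X \<in> twin_classes M W"
  shows "rep X \<in> space M"
proof -
  obtain x where "x \<in> space M" "X = proj x"
    using assms unfolding twin_classes_def twin_proj_def by (elim quotientE) blast
  then show ?thesis
    using twin_rep_proj twin_in_space by blast
qed

lemma sigma_algebra_twin_quot_sets: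
  "sigma_algebra (twin_classes M W)
     {B. B \<subseteq> twin_classes M W \<and> proj -` B \<inter> space M \<in> twinfree_sets M W}"
  (is "sigma_algebra ?C ?B")
proof -
  interpret tf: sigma_algebra "space M" "twinfree_sets M W"
    by (rule sigma_algebra_twinfree_sets)
  show ?thesis
    unfolding sigma_algebra_iff2
  proof (intro conjI allI ballI impI)
    show "?B \<subseteq> Pow ?C" "{} \<in> ?B"
      by auto
    show "?C - B \<in> ?B" if "B \<in> ?B" for B
    proof -
      have "proj -` (?C - B) \<inter> space M = space M - (proj -` B \<inter> space M)"
        using twin_proj_in_classes by blast
      then show ?thesis
        using that by auto
    qed
    show "(\<Union>i. B i) \<in> ?B" if "range B \<subseteq> ?B" for B :: "nat \<Rightarrow> 'a set set"
    proof -
      have "(\<Union>i. proj -` B i \<inter> space M) \<in> twinfree_sets M W"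
        using that by (intro tf.countable_UN) blast
      moreover have "proj -` (\<Union>i. B i) \<inter> space M = (\<Union>i. proj -` B i \<inter> space M)"
        by blast
      ultimately show ?thesis
        using that by auto
    qed
  qed
qed

lemma sets_twin_quot_space:
  "sets Q = {B. B \<subseteq> twin_classes M W \<and> proj -` B \<inter> space M \<in> twinfree_sets M W}"
  unfolding twin_quot_space_def using sigma_algebra_twin_quot_sets
  by (simp add: sigma_algebra.sets_measure_of_eq)

lemma space_twin_quot_space: "space Q = twin_classes M W"
  unfolding twin_quot_space_def using sigma_algebra_twin_quot_sets
  by (simp add: sigma_algebra.space_measure_of_eq)

lemma measurable_twin_proj: "proj \<in> measurable \<A> Q"
  by (rule measurableI)
    (auto simp: space_twin_quot_space sets_twin_quot_space space_twinfree_subalg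
      sets_twinfree_subalg twin_proj_in_classes)

lemma measurable_rep: "rep \<in> measurable Q \<A>"
proof (rule measurableI)
  show "rep X \<in> space \<A>" if "X \<in> space Q" for X
    using that rep_in_space by (simp add: space_twin_quot_space space_twinfree_subalg)
  fix B assume "B \<in> sets \<A>"
  then have B: "B \<in> twinfree_sets M W" "B \<subseteq> space M"
    unfolding sets_twinfree_subalg twinfree_sets_def using sets.sets_into_space by auto
  have "proj -` (rep -` B \<inter> twin_classes M W) \<inter> space M = B"
  proof (intro equalityI subsetI)
    fix x assume "x \<in> proj -` (rep -` B \<inter> twin_classes M W) \<inter> space M"
    then have "x \<in> space M" "rep (proj x) \<in> B"
      by auto
    then show "x \<in> B"
      using B(1) twin_sym[OF twin_rep_proj] unfolding twinfree_sets_def by blast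
  next
    fix x assume "x \<in> B"
    with B have "x \<in> space M" "rep (proj x) \<in> B"
      using twin_rep_proj unfolding twinfree_sets_def by blast+
    then show "x \<in> proj -` (rep -` B \<inter> twin_classes M W) \<inter> space M"
      using twin_proj_in_classes by auto
  qed
  then show "rep -` B \<inter> space Q \<in> sets Q"
    using B unfolding sets_twin_quot_space space_twin_quot_space by auto
qed

lemma twinfree_J_eq: "J' = distr (restr_to_subalg M \<A>) Q proj"
  unfolding twinfree_J_def ..

lemma prob_space_twinfree_J: "prob_space J'"
  unfolding twinfree_J_eq
  by (intro prob_space.prob_space_distr prob_space_restr_to_subalg subalgebra_twinfree_subalg
      prob_space_axioms measurable_in_subalg[OF subalg measurable_twin_proj])

lemma sets_twinfree_J: "sets J' = sets Q"
  unfolding twinfree_J_eq by simp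

lemma measurable_twin_proj_comp:
  "k \<in> borel_measurable Q \<Longrightarrow> (\<lambda>x. k (proj x)) \<in> borel_measurable \<A>"
  using measurable_comp[OF measurable_twin_proj] by (simp add: comp_def)

lemma integral_twinfree_J:
  fixes k :: "'a set \<Rightarrow> real"
  assumes k: "k \<in> borel_measurable Q"
  shows "integral\<^sup>L J' k = (LINT x|M. k (proj x))"
proof -
  have "integral\<^sup>L J' k = (LINT x|restr_to_subalg M \<A>. k (proj x))"
    unfolding twinfree_J_eq
    by (rule integral_distr[OF measurable_in_subalg[OF subalg measurable_twin_proj] k])
  also have "\<dots> = (LINT x|M. k (proj x))"
    by (rule integral_subalgebra2[OF subalg measurable_twin_proj_comp[OF k]])
  finally show ?thesis .
qed

lemma integrable_twinfree_J_iff: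
  fixes k :: "'a set \<Rightarrow> real"
  assumes k: "k \<in> borel_measurable Q"
  shows "integrable J' k \<longleftrightarrow> integrable M (\<lambda>x. k (proj x))"
proof -
  have "integrable J' k \<longleftrightarrow> integrable (restr_to_subalg M \<A>) (\<lambda>x. k (proj x))"
    unfolding twinfree_J_eq
    by (rule integrable_distr_eq[OF measurable_in_subalg[OF subalg measurable_twin_proj] k])
  also have "\<dots> \<longleftrightarrow> integrable M (\<lambda>x. k (proj x))"
    using integrable_from_subalg[OF subalg] integrable_in_subalg[OF subalg measurable_twin_proj_comp[OF k]]
    by blast
  finally show ?thesis .
qed

lemma integral_twinfree_J_cong_AE:
  fixes k :: "'a set \<Rightarrow> real"
  assumes "k \<in> borel_measurable Q" "h \<in> borel_measurable M" "AE x in M. k (proj x) = h x"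
  shows "integral\<^sup>L J' k = integral\<^sup>L M h"
  unfolding integral_twinfree_J[OF assms(1)]
  using assms measurable_from_subalg[OF subalg measurable_twin_proj_comp[OF assms(1)]]
  by (intro integral_cong_AE) auto

definition quot_fun :: "('a \<Rightarrow> real) \<Rightarrow> 'a set \<Rightarrow> real" where
  "quot_fun u X = real_cond_exp M \<A> u (rep X)"

lemma measurable_quot_fun[measurable]: "quot_fun u \<in> borel_measurable Q"
  unfolding quot_fun_def[abs_def] using measurable_comp[OF measurable_rep borel_measurable_cond_exp]
  by (simp add: comp_def)

lemma quot_fun_proj: "x \<in> space M \<Longrightarrow> quot_fun u (proj x) = real_cond_exp M \<A> u x"
  unfolding quot_fun_def using twin_eq_if_measurable_twinfree[OF borel_measurable_cond_exp twin_rep_proj]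
  by metis

lemma quot_fun_proj_AE:
  assumes "u \<in> S"
  shows "AE x in M. quot_fun u (proj x) = u x"
proof -
  have "AE x in M. real_cond_exp M \<A> u x = u x"
    using assms mem_twin_const_L1_iff by blast
  with AE_space show ?thesis
    by eventually_elim (simp add: quot_fun_proj)
qed

lemma integrable_quot_fun:
  assumes "integrable M u"
  shows "integrable J' (quot_fun u)"
proof -
  have "integrable M (\<lambda>x. quot_fun u (proj x)) \<longleftrightarrow> integrable M (real_cond_exp M \<A> u)"
    by (intro Bochner_Integration.integrable_cong) (auto simp: quot_fun_proj)
  then show ?thesis
    using assms integrable_twinfree_J_iff[OF measurable_quot_fun] real_cond_exp_int(1) by blast
qed

lemma l1dist_quot_fun:
  assumes "u \<in> S" "v \<in> S"
  shows "l1dist J' (quot_fun u) (quot_fun v) = l1dist M u v"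
  unfolding l1dist_def
  using assms quot_fun_proj_AE[OF assms(1)] quot_fun_proj_AE[OF assms(2)]
  by (intro integral_twinfree_J_cong_AE)
    (auto simp: twin_const_L1_integrable borel_measurable_integrable)

lemma quot_fun_onto:
  assumes w: "integrable J' w"
  shows "\<exists>u\<in>S. AE X in J'. quot_fun u X = w X"
proof
  have wQ[measurable]: "w \<in> borel_measurable Q"
    using borel_measurable_integrable[OF w] measurable_cong_sets[OF sets_twinfree_J refl] by blast
  define u where "u x = w (proj x)" for x
  have "integrable M u"
    unfolding u_def using w integrable_twinfree_J_iff[OF wQ] by simp
  moreover have "u \<in> borel_measurable \<A>"
    unfolding u_def by (rule measurable_twin_proj_comp[OF wQ])
  ultimately show uS: "u \<in> S"
    by (rule twin_const_L1_if_measurable_twinfree)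
  have "(LINT X|J'. \<bar>quot_fun u X - w X\<bar>) = (LINT x|M. 0)"
    using quot_fun_proj_AE[OF uS] by (intro integral_twinfree_J_cong_AE) (auto simp: u_def)
  moreover have "integrable J' (\<lambda>X. \<bar>quot_fun u X - w X\<bar>)"
    using integrable_quot_fun[OF twin_const_L1_integrable[OF uS]] w by auto
  ultimately have "AE X in J'. \<bar>quot_fun u X - w X\<bar> = 0"
    using integral_nonneg_eq_0_iff_AE[of J' "\<lambda>X. \<bar>quot_fun u X - w X\<bar>"] by simp
  then show "AE X in J'. quot_fun u X = w X"
    by eventually_elim simp
qed

lemma pair_sigma_finite: "pair_sigma_finite M M"
  by (intro pair_sigma_finite.intro) (auto simp: prob_space_imp_sigma_finite prob_space_axioms)

lemma subalgebra_pair_twinfree: "subalgebra (M \<Otimes>\<^sub>M M) (\<A> \<Otimes>\<^sub>M \<A>)"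
  unfolding subalgebra_def
proof
  show "space (\<A> \<Otimes>\<^sub>M \<A>) = space (M \<Otimes>\<^sub>M M)"
    by (simp add: space_pair_measure space_twinfree_subalg)
  have "{a \<times> b |a b. a \<in> sets \<A> \<and> b \<in> sets \<A>} \<subseteq> {a \<times> b |a b. a \<in> sets M \<and> b \<in> sets M}"
    using subalg unfolding subalgebra_def by blast
  then show "sets (\<A> \<Otimes>\<^sub>M \<A>) \<subseteq> sets (M \<Otimes>\<^sub>M M)"
    unfolding sets_pair_measure space_twinfree_subalg by (rule sigma_sets_mono')
qed

lemma sigma_finite_subalgebra_pair_twinfree: "sigma_finite_subalgebra (M \<Otimes>\<^sub>M M) (\<A> \<Otimes>\<^sub>M \<A>)"
  unfolding sigma_finite_subalgebra_def
  using subalgebra_pair_twinfree prob_space_imp_sigma_finite[OF prob_space_restr_to_subalg[OF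
      subalgebra_pair_twinfree prob_space_pair[OF prob_space_axioms prob_space_axioms]]]
  by blast

definition W_cond_exp :: "'a \<times> 'a \<Rightarrow> real" where
  "W_cond_exp = real_cond_exp (M \<Otimes>\<^sub>M M) (\<A> \<Otimes>\<^sub>M \<A>) (\<lambda>p. W (fst p) (snd p))"

lemma measurable_W_cond_exp[measurable]:
  "W_cond_exp \<in> borel_measurable (\<A> \<Otimes>\<^sub>M \<A>)" "W_cond_exp \<in> borel_measurable (M \<Otimes>\<^sub>M M)"
  unfolding W_cond_exp_def by simp_all

lemma W_cond_exp_twin_eq: "twin M W x x' \<Longrightarrow> twin M W y y' \<Longrightarrow> W_cond_exp (x, y) = W_cond_exp (x', y')"
  by (rule twin_eq_if_measurable_twinfree_pair[OF measurable_W_cond_exp(1)])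

lemma twinfree_W_proj:
  "x \<in> space M \<Longrightarrow> y \<in> space M \<Longrightarrow> twinfree_W M W (proj x) (proj y) = W_cond_exp (x, y)"
  unfolding twinfree_W_def W_cond_exp_def[symmetric] rep_def[symmetric]
  using W_cond_exp_twin_eq[OF twin_sym[OF twin_rep_proj] twin_sym[OF twin_rep_proj]] by metis

lemma measurable_twinfree_W:
  "(\<lambda>p. twinfree_W M W (fst p) (snd p)) \<in> borel_measurable (Q \<Otimes>\<^sub>M Q)"
proof -
  have "(\<lambda>p. (rep (fst p), rep (snd p))) \<in> measurable (Q \<Otimes>\<^sub>M Q) (\<A> \<Otimes>\<^sub>M \<A>)"
    using measurable_rep by measurable
  from measurable_comp[OF this measurable_W_cond_exp(1)] show ?thesis
    unfolding twinfree_W_def W_cond_exp_def[symmetric] rep_def[symmetric] by (simp add: comp_def)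
qed

lemma integrable_mult_W:
  assumes H: "integrable (M \<Otimes>\<^sub>M M) H"
  shows "integrable (M \<Otimes>\<^sub>M M) (\<lambda>p. H p * W (fst p) (snd p))"
proof (rule Bochner_Integration.integrable_bound[OF H])
  show "(\<lambda>p. H p * W (fst p) (snd p)) \<in> borel_measurable (M \<Otimes>\<^sub>M M)"
    using borel_measurable_integrable[OF H] by measurable
  show "AE p in M \<Otimes>\<^sub>M M. norm (H p * W (fst p) (snd p)) \<le> norm (H p)"
    using W_bounds by (intro AE_I2) (auto simp: space_pair_measure abs_mult intro: mult_left_le)
qed

lemma integrable_W_cond_exp_mult:
  assumes H: "H \<in> borel_measurable (\<A> \<Otimes>\<^sub>M \<A>)" "integrable (M \<Otimes>\<^sub>M M) H"
  shows "integrable (M \<Otimes>\<^sub>M M) (\<lambda>p. H p * W_cond_exp p)"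
    and "integral\<^sup>L (M \<Otimes>\<^sub>M M) (\<lambda>p. H p * W_cond_exp p)
      = integral\<^sup>L (M \<Otimes>\<^sub>M M) (\<lambda>p. H p * W (fst p) (snd p))"
  unfolding W_cond_exp_def
  using sigma_finite_subalgebra.real_cond_exp_intg[OF sigma_finite_subalgebra_pair_twinfree
      integrable_mult_W[OF H(2)] H(1)]
  by auto

lemma integrable_pair_fst:
  fixes a :: "'a \<Rightarrow> real"
  assumes "integrable M a"
  shows "integrable (M \<Otimes>\<^sub>M M) (\<lambda>p. a (fst p))"
proof -
  have "integrable (distr (M \<Otimes>\<^sub>M M) M fst) a"
    using assms by (simp add: distr_pair_fst)
  then show ?thesis
    by (intro integrable_distr[of fst "M \<Otimes>\<^sub>M M" M a]) auto
qed

lemma integrable_pair_snd: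
  fixes a :: "'a \<Rightarrow> real"
  assumes "integrable M a"
  shows "integrable (M \<Otimes>\<^sub>M M) (\<lambda>p. a (snd p))"
  using pair_sigma_finite.integrable_product_swap[OF pair_sigma_finite integrable_pair_fst[OF assms]]
  unfolding case_prod_beta by simp

end

section \<open>The graphon dynamical system\<close>

locale graphon_dynamics = graphon_space +
  fixes f g :: "real \<times> real \<Rightarrow> real" and Lf Lg :: real
  assumes f_lipschitz: "Lf-lipschitz_on UNIV f" and g_lipschitz: "Lg-lipschitz_on UNIV g"
begin

lemma f_measurable[measurable]: "f \<in> borel_measurable borel"
  using lipschitz_on_continuous_on[OF f_lipschitz] by (rule borel_measurable_continuous_onI)

lemma g_measurable[measurable]: "g \<in> borel_measurable borel"
  using lipschitz_on_continuous_on[OF g_lipschitz] by (rule borel_measurable_continuous_onI)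

lemma Lf_nonneg: "0 \<le> Lf"
  using lipschitz_on_nonneg[OF f_lipschitz] .

lemma Lg_nonneg: "0 \<le> Lg"
  using lipschitz_on_nonneg[OF g_lipschitz] .

definition interaction :: "('a \<Rightarrow> real) \<Rightarrow> 'a \<Rightarrow> real" where
  "interaction u x = (LINT y|M. W x y * g (u x, u y))"

abbreviation F :: "('a \<Rightarrow> real) \<Rightarrow> 'a \<Rightarrow> real" where
  "F \<equiv> gds_field M W f g"

lemma gds_field_eq: "F u x = f (u x, interaction u x)"
  unfolding gds_field_def interaction_def ..

lemma measurable_interaction[measurable]:
  assumes [measurable]: "u \<in> borel_measurable M"
  shows "interaction u \<in> borel_measurable M"
proof -
  have "(\<lambda>(x, y). W x y * g (u x, u y)) \<in> borel_measurable (M \<Otimes>\<^sub>M M)"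
    unfolding case_prod_beta by measurable
  then have "(\<lambda>x. LINT y|M. W x y * g (u x, u y)) \<in> borel_measurable M"
    by (rule borel_measurable_lebesgue_integral)
  then show ?thesis
    by (simp add: interaction_def[abs_def])
qed

lemma measurable_gds_field[measurable]:
  assumes [measurable]: "u \<in> borel_measurable M"
  shows "F u \<in> borel_measurable M"
  unfolding gds_field_eq[abs_def] by measurable

lemma abs_W_mult_le: "x \<in> space M \<Longrightarrow> y \<in> space M \<Longrightarrow> \<bar>W x y * r\<bar> \<le> \<bar>r\<bar>"
  using W_bounds[of x y] by (auto simp: abs_mult intro: mult_left_le_one_le)

lemma abs_W_mult_g_le:
  assumes "x \<in> space M" "y \<in> space M"
  shows "\<bar>W x y * g (a, b)\<bar> \<le> \<bar>g (0, 0)\<bar> + Lg * (\<bar>a\<bar> + \<bar>b\<bar>)"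
  using abs_W_mult_le[OF assms, of "g (a, b)"] lipschitz_on_UNIV_Pair_abs_bound[OF g_lipschitz, of a b]
  by linarith

lemma integrable_interaction_section:
  assumes u: "integrable M u" and x: "x \<in> space M"
  shows "integrable M (\<lambda>y. W x y * g (u x, u y))"
proof (rule Bochner_Integration.integrable_bound)
  show "integrable M (\<lambda>y. \<bar>g (0, 0)\<bar> + Lg * (\<bar>u x\<bar> + \<bar>u y\<bar>))"
    using u by auto
  have [measurable]: "u \<in> borel_measurable M"
    using u by (rule borel_measurable_integrable)
  show "(\<lambda>y. W x y * g (u x, u y)) \<in> borel_measurable M"
    using x by measurable
  show "AE y in M. norm (W x y * g (u x, u y)) \<le> norm (\<bar>g (0, 0)\<bar> + Lg * (\<bar>u x\<bar> + \<bar>u y\<bar>))"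
    using abs_W_mult_g_le[OF x] Lg_nonneg by (intro AE_I2) (auto intro: order_trans[OF _ abs_ge_self])
qed

lemma abs_interaction_le:
  assumes u: "integrable M u" and x: "x \<in> space M"
  shows "\<bar>interaction u x\<bar> \<le> \<bar>g (0, 0)\<bar> + Lg * \<bar>u x\<bar> + Lg * (LINT y|M. \<bar>u y\<bar>)"
proof -
  have "\<bar>interaction u x\<bar> \<le> (LINT y|M. \<bar>W x y * g (u x, u y)\<bar>)"
    unfolding interaction_def by (rule integral_abs_bound)
  also have "\<dots> \<le> (LINT y|M. \<bar>g (0, 0)\<bar> + Lg * \<bar>u x\<bar> + Lg * \<bar>u y\<bar>)"
  proof (rule integral_mono)
    show "\<bar>W x y * g (u x, u y)\<bar> \<le> \<bar>g (0, 0)\<bar> + Lg * \<bar>u x\<bar> + Lg * \<bar>u y\<bar>" if "y \<in> space M" for y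
      using abs_W_mult_g_le[OF x that, of "u x" "u y"] by (simp add: algebra_simps)
  qed (use u integrable_interaction_section[OF u x] in auto)
  also have "\<dots> = \<bar>g (0, 0)\<bar> + Lg * \<bar>u x\<bar> + Lg * (LINT y|M. \<bar>u y\<bar>)"
    using u by (simp add: prob_space)
  finally show ?thesis .
qed

lemma integrable_interaction:
  assumes u: "integrable M u"
  shows "integrable M (interaction u)"
proof (rule Bochner_Integration.integrable_bound)
  show "integrable M (\<lambda>x. \<bar>g (0, 0)\<bar> + Lg * \<bar>u x\<bar> + Lg * (LINT y|M. \<bar>u y\<bar>))"
    using u by auto
  show "interaction u \<in> borel_measurable M"
    using u by (intro measurable_interaction borel_measurable_integrable)
  show "AE x in M. norm (interaction u x) \<le> norm (\<bar>g (0, 0)\<bar> + Lg * \<bar>u x\<bar> + Lg * (LINT y|M. \<bar>u y\<bar>))"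
    using abs_interaction_le[OF u] by (intro AE_I2) (force intro: order_trans[OF _ abs_ge_self])
qed

lemma integrable_gds_field:
  assumes u: "integrable M u"
  shows "integrable M (F u)"
proof (rule Bochner_Integration.integrable_bound)
  show "integrable M (\<lambda>x. \<bar>f (0, 0)\<bar> + Lf * (\<bar>u x\<bar> + \<bar>interaction u x\<bar>))"
    using u integrable_interaction[OF u] by auto
  show "F u \<in> borel_measurable M"
    using u by (intro measurable_gds_field borel_measurable_integrable)
  show "AE x in M. norm (F u x) \<le> norm (\<bar>f (0, 0)\<bar> + Lf * (\<bar>u x\<bar> + \<bar>interaction u x\<bar>))"
    using lipschitz_on_UNIV_Pair_abs_bound[OF f_lipschitz] Lf_nonneg
    unfolding gds_field_eq by (intro AE_I2) auto
qed

lemma abs_interaction_diff_le: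
  assumes u: "integrable M u" and v: "integrable M v" and x: "x \<in> space M"
  shows "\<bar>interaction u x - interaction v x\<bar> \<le> Lg * \<bar>u x - v x\<bar> + Lg * (LINT y|M. \<bar>u y - v y\<bar>)"
proof -
  have "interaction u x - interaction v x = (LINT y|M. W x y * g (u x, u y) - W x y * g (v x, v y))"
    unfolding interaction_def using integrable_interaction_section[OF u x] integrable_interaction_section[OF v x]
    by (rule Bochner_Integration.integral_diff[symmetric])
  then have "\<bar>interaction u x - interaction v x\<bar> \<le> (LINT y|M. \<bar>W x y * g (u x, u y) - W x y * g (v x, v y)\<bar>)"
    using integral_abs_bound by metis
  also have "\<dots> \<le> (LINT y|M. Lg * \<bar>u x - v x\<bar> + Lg * \<bar>u y - v y\<bar>)"
  proof (rule integral_mono)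
    show "\<bar>W x y * g (u x, u y) - W x y * g (v x, v y)\<bar> \<le> Lg * \<bar>u x - v x\<bar> + Lg * \<bar>u y - v y\<bar>"
      if "y \<in> space M" for y
      using abs_W_mult_le[OF x that, of "g (u x, u y) - g (v x, v y)"]
        lipschitz_on_UNIV_Pair_abs_le[OF g_lipschitz, of "u x" "u y" "v x" "v y"]
      by (simp add: algebra_simps)
  qed (use u v integrable_interaction_section[OF u x] integrable_interaction_section[OF v x] in auto)
  also have "\<dots> = Lg * \<bar>u x - v x\<bar> + Lg * (LINT y|M. \<bar>u y - v y\<bar>)"
    using u v by (simp add: prob_space)
  finally show ?thesis .
qed

lemma gds_field_l1_lipschitz:
  assumes u: "integrable M u" and v: "integrable M v"
  shows "(LINT x|M. \<bar>F u x - F v x\<bar>) \<le> Lf * (1 + 2 * Lg) * (LINT x|M. \<bar>u x - v x\<bar>)"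
proof -
  define D where "D = (LINT y|M. \<bar>u y - v y\<bar>)"
  have "(LINT x|M. \<bar>F u x - F v x\<bar>) \<le> (LINT x|M. Lf * (1 + Lg) * \<bar>u x - v x\<bar> + Lf * Lg * D)"
  proof (rule integral_mono)
    fix x assume x: "x \<in> space M"
    have "\<bar>F u x - F v x\<bar> \<le> Lf * (\<bar>u x - v x\<bar> + \<bar>interaction u x - interaction v x\<bar>)"
      unfolding gds_field_eq by (rule lipschitz_on_UNIV_Pair_abs_le[OF f_lipschitz])
    also have "\<dots> \<le> Lf * (\<bar>u x - v x\<bar> + (Lg * \<bar>u x - v x\<bar> + Lg * D))"
      using abs_interaction_diff_le[OF u v x] Lf_nonneg unfolding D_def by (intro mult_left_mono) auto
    finally show "\<bar>F u x - F v x\<bar> \<le> Lf * (1 + Lg) * \<bar>u x - v x\<bar> + Lf * Lg * D"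
      by (simp add: algebra_simps)
  qed (use u v integrable_gds_field[OF u] integrable_gds_field[OF v] in auto)
  also have "\<dots> = Lf * (1 + 2 * Lg) * D"
    using u v by (simp add: prob_space D_def algebra_simps)
  finally show ?thesis
    unfolding D_def .
qed

lemma interaction_twin_eq:
  assumes [measurable]: "u \<in> borel_measurable M" and "twin M W x y" and "u x = u y"
  shows "interaction u x = interaction u y"
proof -
  have "x \<in> space M" "y \<in> space M" and "AE z in M. W x z = W y z"
    using \<open>twin M W x y\<close> unfolding twin_def by auto
  then show ?thesis
    unfolding interaction_def \<open>u x = u y\<close> by (intro integral_cong_AE) (auto elim: AE_mp)
qed

lemma measurable_twinfree_interaction:
  assumes u: "u \<in> borel_measurable \<A>"
  shows "interaction u \<in> borel_measurable \<A>"
proof (rule measurable_twinfreeI)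
  have uM: "u \<in> borel_measurable M"
    using measurable_from_subalg[OF subalg u] .
  then show "interaction u \<in> borel_measurable M"
    by (rule measurable_interaction)
  show "interaction u x = interaction u y" if "twin M W x y" for x y
    using interaction_twin_eq[OF uM that twin_eq_if_measurable_twinfree[OF u that]] .
qed

lemma measurable_twinfree_gds_field:
  assumes [measurable]: "u \<in> borel_measurable \<A>"
  shows "F u \<in> borel_measurable \<A>"
  using measurable_twinfree_interaction[OF assms] unfolding gds_field_eq[abs_def] by measurable

lemma gds_field_cong_AE:
  assumes u: "integrable M u" and v: "integrable M v" and uv: "AE x in M. u x = v x"
  shows "AE x in M. F u x = F v x"
  using uv
proof (rule AE_mp, intro AE_I2 impI)
  have [measurable]: "u \<in> borel_measurable M" "v \<in> borel_measurable M"
    using u v by (auto intro: borel_measurable_integrable)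
  fix x assume "x \<in> space M" and "u x = v x"
  have "interaction u x = interaction v x"
    unfolding interaction_def \<open>u x = v x\<close> using \<open>x \<in> space M\<close> uv
    by (intro integral_cong_AE) (auto elim: AE_mp)
  then show "F u x = F v x"
    unfolding gds_field_eq \<open>u x = v x\<close> by simp
qed

lemma cond_exp_dist_gds_field_le:
  assumes a: "integrable M a"
  shows "cond_exp_dist M \<A> (F a) \<le> 2 * (Lf * (1 + 2 * Lg)) * cond_exp_dist M \<A> a"
proof -
  define Pa where "Pa = real_cond_exp M \<A> a"
  have Pa: "integrable M Pa" "Pa \<in> borel_measurable \<A>"
    unfolding Pa_def using a by (auto intro: real_cond_exp_int)
  then have "F Pa \<in> S"
    by (intro twin_const_L1_if_measurable_twinfree integrable_gds_field measurable_twinfree_gds_field)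
  then have "cond_exp_dist M \<A> (F a) \<le> 2 * (LINT x|M. \<bar>F a x - F Pa x\<bar>)"
    using cond_exp_dist_diff_le[OF integrable_gds_field[OF a] twin_const_L1_integrable]
      cond_exp_dist_eq_0_iff_twin_const[OF twin_const_L1_integrable] by fastforce
  also have "\<dots> \<le> 2 * (Lf * (1 + 2 * Lg) * cond_exp_dist M \<A> a)"
    using gds_field_l1_lipschitz[OF a Pa(1)] unfolding cond_exp_dist_def Pa_def by simp
  finally show ?thesis
    by simp
qed

lemma cond_exp_dist_step_le:
  assumes a: "integrable M a" and b: "integrable M b" and "h \<noteq> 0"
  shows "cond_exp_dist M \<A> b \<le> cond_exp_dist M \<A> a
    + \<bar>h\<bar> * (2 * (Lf * (1 + 2 * Lg))) * cond_exp_dist M \<A> a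
    + 2 * \<bar>h\<bar> * (LINT x|M. \<bar>(b x - a x) / h - F a x\<bar>)"
proof -
  define R where "R x = (b x - a x) / h - F a x" for x
  have Fa: "integrable M (F a)"
    using integrable_gds_field[OF a] .
  have R: "integrable M R"
    unfolding R_def using a b Fa by auto
  have "b x = a x + (h * F a x + h * R x)" for x
    unfolding R_def using \<open>h \<noteq> 0\<close> by (simp add: field_simps)
  then have b_eq: "b = (\<lambda>x. a x + (h * F a x + h * R x))"
    by (rule ext)
  have hFa: "integrable M (\<lambda>x. h * F a x)"
    using Fa by (rule integrable_mult_right)
  have hR: "integrable M (\<lambda>x. h * R x)"
    using R by (rule integrable_mult_right)
  have "cond_exp_dist M \<A> b \<le> cond_exp_dist M \<A> a + cond_exp_dist M \<A> (\<lambda>x. h * F a x + h * R x)"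
    unfolding b_eq by (rule cond_exp_dist_add_le[OF a Bochner_Integration.integrable_add[OF hFa hR]])
  also have "\<dots> \<le> cond_exp_dist M \<A> a
      + (cond_exp_dist M \<A> (\<lambda>x. h * F a x) + cond_exp_dist M \<A> (\<lambda>x. h * R x))"
    by (rule add_left_mono[OF cond_exp_dist_add_le[OF hFa hR]])
  also have "\<dots> = cond_exp_dist M \<A> a + \<bar>h\<bar> * cond_exp_dist M \<A> (F a) + \<bar>h\<bar> * cond_exp_dist M \<A> R"
    using cond_exp_dist_cmult[OF Fa] cond_exp_dist_cmult[OF R] by simp
  also have "\<dots> \<le> cond_exp_dist M \<A> a + \<bar>h\<bar> * (2 * (Lf * (1 + 2 * Lg)) * cond_exp_dist M \<A> a)
      + \<bar>h\<bar> * (2 * (LINT x|M. \<bar>R x\<bar>))"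
    using cond_exp_dist_gds_field_le[OF a] cond_exp_dist_le_integral_abs[OF R]
    by (intro add_mono mult_left_mono) auto
  finally show ?thesis
    unfolding R_def by (simp add: algebra_simps)
qed

lemma gds_trajectory_l1_continuous:
  assumes traj: "gds_trajectory M W f g u"
  shows "((\<lambda>h. LINT x|M. \<bar>u (t + h) x - u t x\<bar>) \<longlongrightarrow> 0) (at 0)"
proof (rule Lim_null_comparison)
  define D where "D h = (LINT x|M. \<bar>(u (t + h) x - u t x) / h - F (u t) x\<bar>)" for h
  define c where "c = (LINT x|M. \<bar>F (u t) x\<bar>)"
  have "(D \<longlongrightarrow> 0) (at 0)" and ui: "\<And>s. integrable M (u s)" and "integrable M (F (u t))"
    using traj unfolding gds_trajectory_def D_def by auto
  then have "((\<lambda>h. \<bar>h\<bar> * D h + \<bar>h\<bar> * c) \<longlongrightarrow> \<bar>0\<bar> * 0 + \<bar>0\<bar> * c) (at 0)"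
    by (intro tendsto_intros)
  then show "((\<lambda>h. \<bar>h\<bar> * D h + \<bar>h\<bar> * c) \<longlongrightarrow> 0) (at 0)"
    by simp
  have "norm (LINT x|M. \<bar>u (t + h) x - u t x\<bar>) \<le> \<bar>h\<bar> * D h + \<bar>h\<bar> * c" if "h \<noteq> 0" for h
    unfolding D_def c_def
    using integral_abs_diff_le_difference_quotient[OF ui ui \<open>integrable M (F (u t))\<close> that] by simp
  then show "\<forall>\<^sub>F h in at 0. norm (LINT x|M. \<bar>u (t + h) x - u t x\<bar>) \<le> \<bar>h\<bar> * D h + \<bar>h\<bar> * c"
    by (auto simp: eventually_at_filter)
qed

lemma gds_trajectory_cond_exp_dist_continuous:
  assumes traj: "gds_trajectory M W f g u"
  shows "isCont (\<lambda>t. cond_exp_dist M \<A> (u t)) t"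
proof -
  have ui: "\<And>s. integrable M (u s)"
    using traj unfolding gds_trajectory_def by auto
  have "((\<lambda>h. cond_exp_dist M \<A> (u (t + h)) - cond_exp_dist M \<A> (u t)) \<longlongrightarrow> 0) (at 0)"
  proof (rule Lim_null_comparison)
    show "\<forall>\<^sub>F h in at 0. norm (cond_exp_dist M \<A> (u (t + h)) - cond_exp_dist M \<A> (u t))
        \<le> 2 * (LINT x|M. \<bar>u (t + h) x - u t x\<bar>)"
      using abs_cond_exp_dist_diff_le[OF ui ui] by simp
    show "((\<lambda>h. 2 * (LINT x|M. \<bar>u (t + h) x - u t x\<bar>)) \<longlongrightarrow> 0) (at 0)"
      using tendsto_mult_right_zero[OF gds_trajectory_l1_continuous[OF traj]] .
  qed
  then show ?thesis
    by (simp add: isCont_def LIM_offset_zero_iff LIM_zero_iff)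
qed

lemma gds_invariant_twin_const_L1: "gds_invariant M W f g S"
  unfolding gds_invariant_def
proof (intro allI impI)
  fix u assume traj: "gds_trajectory M W f g u" and "u 0 \<in> S"
  have ui: "\<And>t. integrable M (u t)"
    using traj unfolding gds_trajectory_def by auto
  define D where "D t h = (LINT x|M. \<bar>(u (t + h) x - u t x) / h - F (u t) x\<bar>)" for t h
  have D_lim: "(D t \<longlongrightarrow> 0) (at 0)" for t
    using traj unfolding gds_trajectory_def D_def by auto
  have "cond_exp_dist M \<A> (u t) \<le> 0" for t
  proof (rule gronwall_nonpos[where \<phi> = "\<lambda>t. cond_exp_dist M \<A> (u t)" and K = "2 * (Lf * (1 + 2 * Lg))"])
    show "isCont (\<lambda>t. cond_exp_dist M \<A> (u t)) s" for s
      by (rule gds_trajectory_cond_exp_dist_continuous[OF traj])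
    show "cond_exp_dist M \<A> (u 0) \<le> 0"
      using cond_exp_dist_eq_0_iff_twin_const[OF ui, of 0] \<open>u 0 \<in> S\<close> by (metis order_refl)
    show "0 \<le> 2 * (Lf * (1 + 2 * Lg))"
      using Lf_nonneg Lg_nonneg by simp
    fix s \<epsilon> :: real assume "0 < \<epsilon>"
    then have "\<forall>\<^sub>F h in at 0. D s h < \<epsilon> / 2"
      using D_lim by (intro order_tendstoD(2)) auto
    then obtain d where "d > 0" and d: "\<And>h. h \<noteq> 0 \<Longrightarrow> \<bar>h\<bar> < d \<Longrightarrow> D s h < \<epsilon> / 2"
      unfolding eventually_at by auto
    have "cond_exp_dist M \<A> (u (s + h)) \<le> cond_exp_dist M \<A> (u s)
        + \<bar>h\<bar> * (2 * (Lf * (1 + 2 * Lg))) * cond_exp_dist M \<A> (u s) + \<epsilon> * \<bar>h\<bar>"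
      if "h \<noteq> 0" "\<bar>h\<bar> < d" for h
    proof -
      have "2 * \<bar>h\<bar> * D s h \<le> 2 * \<bar>h\<bar> * (\<epsilon> / 2)"
        using d[OF that] by (intro mult_left_mono) auto
      then show ?thesis
        using cond_exp_dist_step_le[OF ui[of s] ui[of "s + h"] \<open>h \<noteq> 0\<close>] mult.commute[of \<epsilon> "\<bar>h\<bar>"]
        unfolding D_def by linarith
    qed
    with \<open>d > 0\<close> show "\<exists>d>0. \<forall>h. h \<noteq> 0 \<and> \<bar>h\<bar> < d \<longrightarrow> cond_exp_dist M \<A> (u (s + h))
        \<le> cond_exp_dist M \<A> (u s) + \<bar>h\<bar> * (2 * (Lf * (1 + 2 * Lg))) * cond_exp_dist M \<A> (u s) + \<epsilon> * \<bar>h\<bar>"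
      by blast
  qed
  then show "u t \<in> S" for t
    using cond_exp_dist_nonneg[of "u t"] cond_exp_dist_eq_0_iff_twin_const[OF ui[of t]]
    by (metis order_antisym)
qed

lemma integrable_g_pair:
  assumes a: "integrable M a"
  shows "integrable (M \<Otimes>\<^sub>M M) (\<lambda>p. g (a (fst p), a (snd p)))"
proof -
  interpret pair: prob_space "M \<Otimes>\<^sub>M M"
    by (intro prob_space_pair prob_space_axioms)
  show ?thesis
  proof (rule Bochner_Integration.integrable_bound)
    show "integrable (M \<Otimes>\<^sub>M M) (\<lambda>p. \<bar>g (0, 0)\<bar> + Lg * (\<bar>a (fst p)\<bar> + \<bar>a (snd p)\<bar>))"
      using integrable_pair_fst[OF a] integrable_pair_snd[OF a] by auto
    have [measurable]: "a \<in> borel_measurable M"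
      using a by (rule borel_measurable_integrable)
    show "(\<lambda>p. g (a (fst p), a (snd p))) \<in> borel_measurable (M \<Otimes>\<^sub>M M)"
      by measurable
    show "AE p in M \<Otimes>\<^sub>M M. norm (g (a (fst p), a (snd p)))
        \<le> norm (\<bar>g (0, 0)\<bar> + Lg * (\<bar>a (fst p)\<bar> + \<bar>a (snd p)\<bar>))"
      using lipschitz_on_UNIV_Pair_abs_bound[OF g_lipschitz] Lg_nonneg by (intro AE_I2) auto
  qed
qed

definition cond_interaction :: "('a \<Rightarrow> real) \<Rightarrow> 'a \<Rightarrow> real" where
  "cond_interaction a x = (LINT y|M. W_cond_exp (x, y) * g (a x, a y))"

lemma integrable_cond_interaction:
  assumes a: "integrable M a" and [measurable]: "a \<in> borel_measurable \<A>"
  shows "integrable M (cond_interaction a)"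
proof -
  have "integrable (M \<Otimes>\<^sub>M M) (\<lambda>p. g (a (fst p), a (snd p)) * W_cond_exp p)"
    using integrable_g_pair[OF a] by (intro integrable_W_cond_exp_mult) measurable
  from pair_sigma_finite.integrable_fst'[OF pair_sigma_finite this] show ?thesis
    unfolding cond_interaction_def[abs_def] by (simp add: mult.commute)
qed

lemma measurable_twinfree_cond_interaction:
  assumes a: "integrable M a" and aA: "a \<in> borel_measurable \<A>"
  shows "cond_interaction a \<in> borel_measurable \<A>"
proof (rule measurable_twinfreeI)
  show "cond_interaction a \<in> borel_measurable M"
    using integrable_cond_interaction[OF assms] by (rule borel_measurable_integrable)
  fix x x' assume "twin M W x x'"
  then have "W_cond_exp (x, y) = W_cond_exp (x', y)" if "y \<in> space M" for y
    using W_cond_exp_twin_eq twin_refl[OF that] by blast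
  then show "cond_interaction a x = cond_interaction a x'"
    unfolding cond_interaction_def twin_eq_if_measurable_twinfree[OF aA \<open>twin M W x x'\<close>]
    by (intro Bochner_Integration.integral_cong) auto
qed

lemma set_integral_cond_interaction:
  assumes a: "integrable M a" and [measurable]: "a \<in> borel_measurable \<A>" and B: "B \<in> sets \<A>"
  shows "(\<integral>x\<in>B. interaction a x \<partial>M) = (\<integral>x\<in>B. cond_interaction a x \<partial>M)"
proof -
  define H where "H p = indicator B (fst p) * g (a (fst p), a (snd p))" for p
  have [measurable]: "B \<in> sets M"
    using B subalg by (auto simp: subalgebra_def)
  have H_meas: "H \<in> borel_measurable (\<A> \<Otimes>\<^sub>M \<A>)"
    unfolding H_def using B by measurable
  have "integrable (M \<Otimes>\<^sub>M M) H"
  proof (rule Bochner_Integration.integrable_bound[OF integrable_g_pair[OF a]])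
    show "H \<in> borel_measurable (M \<Otimes>\<^sub>M M)"
      using measurable_from_subalg[OF subalgebra_pair_twinfree H_meas] .
    show "AE p in M \<Otimes>\<^sub>M M. norm (H p) \<le> norm (g (a (fst p), a (snd p)))"
      unfolding H_def by (intro AE_I2) (simp add: indicator_def)
  qed
  note H = H_meas this
  have HW: "integrable (M \<Otimes>\<^sub>M M) (\<lambda>p. H p * W (fst p) (snd p))"
    using integrable_mult_W[OF H(2)] .
  have "(\<integral>x\<in>B. interaction a x \<partial>M) = (LINT x|M. LINT y|M. H (x, y) * W x y)"
    unfolding set_lebesgue_integral_def interaction_def H_def
    by (simp add: ac_simps)
  also have "\<dots> = integral\<^sup>L (M \<Otimes>\<^sub>M M) (\<lambda>p. H p * W (fst p) (snd p))"
    using pair_sigma_finite.integral_fst'[OF pair_sigma_finite HW] by simp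
  also have "\<dots> = integral\<^sup>L (M \<Otimes>\<^sub>M M) (\<lambda>p. H p * W_cond_exp p)"
    using integrable_W_cond_exp_mult(2)[OF H] by simp
  also have "\<dots> = (LINT x|M. LINT y|M. H (x, y) * W_cond_exp (x, y))"
    using pair_sigma_finite.integral_fst'[OF pair_sigma_finite integrable_W_cond_exp_mult(1)[OF H]] by simp
  also have "\<dots> = (\<integral>x\<in>B. cond_interaction a x \<partial>M)"
    unfolding set_lebesgue_integral_def cond_interaction_def H_def
    by (simp add: ac_simps)
  finally show ?thesis .
qed

lemma cond_interaction_eq_AE:
  assumes a: "integrable M a" and aA: "a \<in> borel_measurable \<A>"
  shows "AE x in M. cond_interaction a x = interaction a x"
proof -
  have "AE x in M. real_cond_exp M \<A> (interaction a) x = cond_interaction a x"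
    using set_integral_cond_interaction[OF a aA] integrable_interaction[OF a]
      integrable_cond_interaction[OF a aA] measurable_twinfree_cond_interaction[OF a aA]
    by (rule real_cond_exp_charact)
  moreover have "AE x in M. real_cond_exp M \<A> (interaction a) x = interaction a x"
    by (rule real_cond_exp_F_meas[OF integrable_interaction[OF a] measurable_twinfree_interaction[OF aA]])
  ultimately show ?thesis
    by eventually_elim simp
qed

abbreviation F' :: "('a set \<Rightarrow> real) \<Rightarrow> 'a set \<Rightarrow> real" where
  "F' \<equiv> gds_field J' (twinfree_W M W) f g"

lemma measurable_quot_gds_field[measurable]:
  assumes [measurable]: "w \<in> borel_measurable Q"
  shows "F' w \<in> borel_measurable Q"
proof -
  interpret J': prob_space J'
    by (rule prob_space_twinfree_J)
  have [measurable]: "(\<lambda>p. twinfree_W M W (fst p) (snd p)) \<in> borel_measurable (Q \<Otimes>\<^sub>M Q)"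
    by (rule measurable_twinfree_W)
  have "(\<lambda>(X, Y). twinfree_W M W X Y * g (w X, w Y)) \<in> borel_measurable (Q \<Otimes>\<^sub>M Q)"
    unfolding case_prod_beta by measurable
  then have "(\<lambda>(X, Y). twinfree_W M W X Y * g (w X, w Y)) \<in> borel_measurable (Q \<Otimes>\<^sub>M J')"
    using measurable_cong_sets[OF sets_pair_measure_cong[OF refl sets_twinfree_J[symmetric]] refl]
    by blast
  then have [measurable]: "(\<lambda>X. LINT Y|J'. twinfree_W M W X Y * g (w X, w Y)) \<in> borel_measurable Q"
    by (rule J'.borel_measurable_lebesgue_integral)
  show ?thesis
    unfolding gds_field_def by measurable
qed

lemma quot_gds_field_proj:
  assumes x: "x \<in> space M"
  shows "F' (quot_fun v) (proj x)
    = f (real_cond_exp M \<A> v x, cond_interaction (real_cond_exp M \<A> v) x)"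
proof -
  have k: "(\<lambda>Y. twinfree_W M W (proj x) Y * g (quot_fun v (proj x), quot_fun v Y)) \<in> borel_measurable Q"
    using measurable_Pair2[OF measurable_twinfree_W, of "proj x"] x
    by (simp add: space_twin_quot_space twin_proj_in_classes)
  have "(LINT Y|J'. twinfree_W M W (proj x) Y * g (quot_fun v (proj x), quot_fun v Y))
      = (LINT y|M. W_cond_exp (x, y) * g (real_cond_exp M \<A> v x, real_cond_exp M \<A> v y))"
    unfolding integral_twinfree_J[OF k] using x
    by (intro Bochner_Integration.integral_cong) (auto simp: twinfree_W_proj quot_fun_proj)
  then show ?thesis
    unfolding gds_field_def cond_interaction_def quot_fun_proj[OF x] by simp
qed

lemma quot_gds_field_proj_AE:
  assumes v: "v \<in> S"
  shows "AE x in M. F' (quot_fun v) (proj x) = F v x"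
proof -
  define Pv where "Pv = real_cond_exp M \<A> v"
  have Pv: "integrable M Pv" "Pv \<in> borel_measurable \<A>"
    unfolding Pv_def using twin_const_L1_integrable[OF v] by (auto intro: real_cond_exp_int)
  have "AE x in M. F Pv x = F v x"
    using gds_field_cong_AE[OF Pv(1) twin_const_L1_integrable[OF v]] v
    unfolding Pv_def mem_twin_const_L1_iff by blast
  with cond_interaction_eq_AE[OF Pv] AE_space show ?thesis
    by eventually_elim (simp add: quot_gds_field_proj gds_field_eq Pv_def)
qed

lemma measurable_quot_gds_field_proj:
  "(\<lambda>x. F' (quot_fun v) (proj x)) \<in> borel_measurable M"
  using measurable_from_subalg[OF subalg measurable_twin_proj_comp[OF measurable_quot_gds_field]]
  by simp

lemma integrable_quot_gds_field:
  assumes v: "v \<in> S"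
  shows "integrable J' (F' (quot_fun v))"
proof -
  have "integrable M (\<lambda>x. F' (quot_fun v) (proj x))"
    using integrable_gds_field[OF twin_const_L1_integrable[OF v]] measurable_quot_gds_field_proj
      AE_symmetric[OF quot_gds_field_proj_AE[OF v]]
    by (rule integrable_cong_AE_imp)
  then show ?thesis
    by (simp add: integrable_twinfree_J_iff)
qed

lemma quot_difference_quotient_eq:
  assumes U: "\<And>t. U t \<in> S"
  shows "(LINT X|J'. \<bar>(quot_fun (U (t + h)) X - quot_fun (U t) X) / h - F' (quot_fun (U t)) X\<bar>)
    = (LINT x|M. \<bar>(U (t + h) x - U t x) / h - F (U t) x\<bar>)"
proof (rule integral_twinfree_J_cong_AE)
  have [measurable]: "U s \<in> borel_measurable M" for s
    using twin_const_L1_integrable[OF U] by (rule borel_measurable_integrable)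
  show "(\<lambda>x. \<bar>(U (t + h) x - U t x) / h - F (U t) x\<bar>) \<in> borel_measurable M"
    by measurable
  show "AE x in M. \<bar>(quot_fun (U (t + h)) (proj x) - quot_fun (U t) (proj x)) / h
      - F' (quot_fun (U t)) (proj x)\<bar> = \<bar>(U (t + h) x - U t x) / h - F (U t) x\<bar>"
    using quot_fun_proj_AE[OF U, of "t + h"] quot_fun_proj_AE[OF U, of t] quot_gds_field_proj_AE[OF U, of t]
    by eventually_elim simp
qed measurable

lemma gds_trajectory_quot_iff:
  assumes U: "\<And>t. U t \<in> S"
  shows "gds_trajectory M W f g U \<longleftrightarrow> gds_trajectory J' (twinfree_W M W) f g (\<lambda>t. quot_fun (U t))"
proof -
  have "(\<lambda>h. LINT X|J'. \<bar>(quot_fun (U (t + h)) X - quot_fun (U t) X) / h - F' (quot_fun (U t)) X\<bar>)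
      = (\<lambda>h. LINT x|M. \<bar>(U (t + h) x - U t x) / h - F (U t) x\<bar>)" for t
    using quot_difference_quotient_eq[of U, OF U] by blast
  then show ?thesis
    unfolding gds_trajectory_def
    using twin_const_L1_integrable[OF U] integrable_gds_field[OF twin_const_L1_integrable[OF U]]
      integrable_quot_fun[OF twin_const_L1_integrable[OF U]] integrable_quot_gds_field[OF U]
    by simp
qed

lemma gds_isometric_twinfree: "gds_isometric M W S J' (twinfree_W M W) f g"
  unfolding gds_isometric_def
  using integrable_quot_fun[OF twin_const_L1_integrable] l1dist_quot_fun quot_fun_onto
    gds_trajectory_quot_iff
  by (intro exI[of _ quot_fun]) blast

end

theorem proposition4p4:
  fixes M :: "'a measure" and W :: "'a \<Rightarrow> 'a \<Rightarrow> real"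
    and f g :: "real \<times> real \<Rightarrow> real"
  assumes "\<exists>C. C-lipschitz_on UNIV f"
    and "\<exists>C. C-lipschitz_on UNIV g"
    and "graphon M W"
  shows "l1_linear_subspace M (twin_const_L1 M W)
       \<and> l1_closed M (twin_const_L1 M W)
       \<and> gds_invariant M W f g (twin_const_L1 M W)
       \<and> gds_isometric M W (twin_const_L1 M W) (twinfree_J M W) (twinfree_W M W) f g"
proof -
  obtain Lf Lg where "Lf-lipschitz_on UNIV f" and "Lg-lipschitz_on UNIV g"
    using assms(1,2) by blast
  with assms(3) interpret graphon_dynamics M W f g Lf Lg
    by (simp add: graphon_dynamics_def graphon_dynamics_axioms_def graphon_space_def)
  show ?thesis
    using l1_linear_subspace_twin_const_L1 l1_closed_twin_const_L1
      gds_invariant_twin_const_L1 gds_isometric_twinfree by blast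
qed

end
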